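(* Let $q = 2^m$ and let $C \subseteq \mathbb{F}_q^n$ be a linear code. Then $C$ is GI-reducible if and only if $C \cap C^\perp = \{0\}$ (with respect to the standard inner product).
   Context: Vectors are row vectors; $I$ and $J$ are the $n\times n$ identity and all-ones matrices. For symmetric $M$, a code $C$ is $M$-LCD if $GMG^T$ is nonsingular for a generator matrix $G$ of $C$, and then $\Pi_{C,M} := MG^T(GMG^T)^{-1}G$. Codes $C_1,C_2$ are permutation-equivalent ($C_1\cong C_2$) if $C_2 = C_1P$ for a permutation matrix $P$; matrices satisfy $A_1 \cong A_2$ if $A_2 = P^TA_1P$ for a permutation matrix $P$. A code $C$ is GI-reducible if there is a nondegenerate $M = aI + bJ$ ($a,b\in\mathbb{F}_q$, $a\neq0$, $a+nb\neq0$) such that every code $CP$ ($P$ a permutation matrix) is $M$-LCD and, for all $C_1, C_2 \in \{CP\}$, $C_1\cong C_2 \iff \Pi_{C_1,M}\cong\Pi_{C_2,M}$. *)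

theory Defs
  imports "Jordan_Normal_Form.Gauss_Jordan_Elimination" "Jordan_Normal_Form.Determinant"
begin

text \<open>Vectors of length n are JNF vectors in carrier_vec n, viewed as row vectors:
  the row vector c times the matrix A is transpose_mat A *v c.\<close>

definition linear_code :: "nat \<Rightarrow> 'a::field vec set \<Rightarrow> bool" where
  "linear_code n C \<longleftrightarrow> C \<subseteq> carrier_vec n \<and> 0\<^sub>v n \<in> C \<and>
     (\<forall>x\<in>C. \<forall>y\<in>C. x + y \<in> C) \<and> (\<forall>a. \<forall>x\<in>C. a \<cdot>\<^sub>v x \<in> C)"

definition dual_code :: "nat \<Rightarrow> 'a::field vec set \<Rightarrow> 'a vec set" where
  "dual_code n C = {v \<in> carrier_vec n. \<forall>c\<in>C. v \<bullet> c = 0}"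

definition gen_mat :: "nat \<Rightarrow> 'a::field vec set \<Rightarrow> 'a mat \<Rightarrow> bool" where
  "gen_mat n C G \<longleftrightarrow> G \<in> carrier_mat (dim_row G) n \<and>
     C = {transpose_mat G *\<^sub>v x | x. x \<in> carrier_vec (dim_row G)} \<and>
     (\<forall>x\<in>carrier_vec (dim_row G). transpose_mat G *\<^sub>v x = 0\<^sub>v n \<longrightarrow> x = 0\<^sub>v (dim_row G))"

definition M_LCD :: "nat \<Rightarrow> 'a::field mat \<Rightarrow> 'a vec set \<Rightarrow> bool" where
  "M_LCD n M C \<longleftrightarrow> (\<exists>G. gen_mat n C G \<and> det (G * M * transpose_mat G) \<noteq> 0)"

definition Pi_mat :: "nat \<Rightarrow> 'a::field mat \<Rightarrow> 'a vec set \<Rightarrow> 'a mat" where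
  "Pi_mat n M C = (let G = (SOME G. gen_mat n C G \<and> det (G * M * transpose_mat G) \<noteq> 0)
     in M * transpose_mat G * the (mat_inverse (G * M * transpose_mat G)) * G)"

definition perm_mat :: "nat \<Rightarrow> 'a::semiring_1 mat \<Rightarrow> bool" where
  "perm_mat n P \<longleftrightarrow> (\<exists>\<sigma>. \<sigma> permutes {..<n} \<and>
     P = mat n n (\<lambda>(i,j). if \<sigma> i = j then 1 else 0))"

definition code_perm :: "'a::semiring_1 vec set \<Rightarrow> 'a mat \<Rightarrow> 'a vec set" where
  "code_perm C P = (\<lambda>c. transpose_mat P *\<^sub>v c) ` C"

definition code_equiv :: "nat \<Rightarrow> 'a::semiring_1 vec set \<Rightarrow> 'a vec set \<Rightarrow> bool" where
  "code_equiv n C1 C2 \<longleftrightarrow> (\<exists>P. perm_mat n P \<and> C2 = code_perm C1 P)"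

definition mat_equiv :: "nat \<Rightarrow> 'a::semiring_1 mat \<Rightarrow> 'a mat \<Rightarrow> bool" where
  "mat_equiv n A1 A2 \<longleftrightarrow> (\<exists>P. perm_mat n P \<and> A2 = transpose_mat P * A1 * P)"

definition GI_reducible :: "nat \<Rightarrow> 'a::field vec set \<Rightarrow> bool" where
  "GI_reducible n C \<longleftrightarrow> (\<exists>a b. a \<noteq> 0 \<and> a + of_nat n * b \<noteq> 0 \<and>
     (let M = a \<cdot>\<^sub>m 1\<^sub>m n + b \<cdot>\<^sub>m mat n n (\<lambda>_. 1) in
       (\<forall>P. perm_mat n P \<longrightarrow> M_LCD n M (code_perm C P)) \<and>
       (\<forall>C1 C2. C1 \<in> {code_perm C P | P. perm_mat n P} \<longrightarrow> C2 \<in> {code_perm C P | P. perm_mat n P} \<longrightarrow>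
          (code_equiv n C1 C2 \<longleftrightarrow> mat_equiv n (Pi_mat n M C1) (Pi_mat n M C2)))))"

end

theory Submission
  imports Defs "Berlekamp_Zassenhaus.Berlekamp_Type_Based"
begin

(*
  In characteristic two a self-orthogonal vector h satisfies
  (\<Sum>i. h\<^sub>i)\<^sup>2 = \<Sum>i. h\<^sub>i\<^sup>2 = h \<bullet> h = 0, so J h = 0 and (a I + b J) h = a h.
  For h \<in> C \<inter> C\<^sup>\<bottom> the vector M h is therefore again orthogonal to C, which puts
  the coordinates of h in the kernel of G M G\<^sup>T; M-LCD forces h = 0.
  Conversely, for an LCD code take M = I. Then \<Pi>\<^sub>C is the orthogonal projection onto C
  along C\<^sup>\<bottom>: it is unique, its image is C, and since a permutation matrix P is orthogonal,
  the projection belonging to C P is P\<^sup>T \<Pi>\<^sub>C P. So two permuted codes are equivalent exactly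
  when their projections are permutation-similar.
*)

section \<open>Characteristic two\<close>

lemma two_eq_zero_if_card_power_of_two:
  assumes "CARD('a::{finite,field}) = 2 ^ m"
  shows "(2::'a) = 0"
proof -
  have "CHAR('a) > 0"
    using finite_imp_CHAR_pos[where 'a='a] by simp
  then have prime: "prime CHAR('a)"
    by (rule prime_CHAR_semidom)
  have "CHAR('a) dvd 2 ^ m"
    using CHAR_dvd_CARD[where 'a='a] assms by simp
  then have "CHAR('a) dvd 2"
    by (rule prime_dvd_power[OF prime])
  then have "CHAR('a) = 2"
    by (rule primes_dvd_imp_eq[OF prime two_is_prime_nat])
  then show ?thesis
    using of_nat_CHAR[where 'a='a] by simp
qed

lemma square_sum_char_two:
  fixes f :: "'b \<Rightarrow> 'a::comm_ring_1"
  assumes "(2::'a) = 0"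
  shows "(\<Sum>j\<in>A. f j) * (\<Sum>j\<in>A. f j) = (\<Sum>j\<in>A. f j * f j)"
proof (induction A rule: infinite_finite_induct)
  case (insert x F)
  have "(f x + s) * (f x + s) = f x * f x + s * s + 2 * (f x * s)" for s :: 'a
    by (simp add: algebra_simps)
  then show ?case
    using insert assms by simp
qed auto

lemma sum_eq_zero_if_self_orthogonal:
  fixes h :: "'a::idom vec"
  assumes "(2::'a) = 0" and "h \<in> carrier_vec n" and "h \<bullet> h = 0"
  shows "(\<Sum>i<n. h $ i) = 0"
  using assms square_sum_char_two[OF assms(1), of "($) h" "{..<n}"]
  by (simp add: scalar_prod_def lessThan_atLeast0)

lemma scalar_plus_all_ones_mult_vec:
  fixes h :: "'a::comm_ring_1 vec"
  assumes "h \<in> carrier_vec n" and "(\<Sum>i<n. h $ i) = 0"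
  shows "(a \<cdot>\<^sub>m 1\<^sub>m n + b \<cdot>\<^sub>m mat n n (\<lambda>_. 1)) *\<^sub>v h = a \<cdot>\<^sub>v h"
proof (rule eq_vecI)
  fix i assume "i < dim_vec (a \<cdot>\<^sub>v h)"
  then have i: "i < n"
    using assms(1) by simp
  have entry: "(a * (if j = i then 1 else 0) + b) * h $ j = (if j = i then a * h $ j else 0) + b * h $ j"
    for j by (simp add: algebra_simps)
  have "((a \<cdot>\<^sub>m 1\<^sub>m n + b \<cdot>\<^sub>m mat n n (\<lambda>_. 1)) *\<^sub>v h) $ i
      = (\<Sum>j<n. (a * (if j = i then 1 else 0) + b) * h $ j)"
    using i assms(1) by (simp add: scalar_prod_def lessThan_atLeast0)
  also have "\<dots> = a * h $ i + b * (\<Sum>j<n. h $ j)"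
    using i by (simp add: entry sum.distrib sum_distrib_left)
  finally show "((a \<cdot>\<^sub>m 1\<^sub>m n + b \<cdot>\<^sub>m mat n n (\<lambda>_. 1)) *\<^sub>v h) $ i = (a \<cdot>\<^sub>v h) $ i"
    using i assms by simp
qed (use assms(1) in simp)

lemma vec_diff_eq_zero_iff:
  fixes x y :: "'a::ab_group_add vec"
  assumes "x \<in> carrier_vec n" and "y \<in> carrier_vec n"
  shows "x - y = 0\<^sub>v n \<longleftrightarrow> x = y"
  using assms by (auto simp: vec_eq_iff)

lemma mat_eq_if_mult_vec_eq:
  fixes A B :: "'a::comm_ring_1 mat"
  assumes A: "A \<in> carrier_mat nr nc" and B: "B \<in> carrier_mat nr nc"
    and eq: "\<And>u. u \<in> carrier_vec nc \<Longrightarrow> A *\<^sub>v u = B *\<^sub>v u"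
  shows "A = B"
proof (rule eq_matI)
  fix i j assume "i < dim_row B" and "j < dim_col B"
  then have i: "i < nr" and j: "j < nc"
    using B by auto
  have "A $$ (i, j) = (A *\<^sub>v unit_vec nc j) $ i"
    using A i j by simp
  also have "\<dots> = (B *\<^sub>v unit_vec nc j) $ i"
    using eq[of "unit_vec nc j"] by simp
  also have "\<dots> = B $$ (i, j)"
    using B i j by simp
  finally show "A $$ (i, j) = B $$ (i, j)" .
qed (use A B in auto)

lemma orthogonal_mat_mult_vec_cancel:
  fixes P :: "'a::field mat"
  assumes P: "P \<in> carrier_mat n n" "P * transpose_mat P = 1\<^sub>m n" and u: "u \<in> carrier_vec n"
  shows "P *\<^sub>v (transpose_mat P *\<^sub>v u) = u" and "transpose_mat P *\<^sub>v (P *\<^sub>v u) = u"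
proof -
  have PT: "transpose_mat P \<in> carrier_mat n n"
    using P(1) by simp
  have "P *\<^sub>v (transpose_mat P *\<^sub>v u) = (P * transpose_mat P) *\<^sub>v u"
    using P(1) PT u by (rule assoc_mult_mat_vec[symmetric])
  then show "P *\<^sub>v (transpose_mat P *\<^sub>v u) = u"
    unfolding P(2) using u by simp
  have "transpose_mat P * P = 1\<^sub>m n"
    using mat_mult_left_right_inverse[OF P(1) PT P(2)] .
  moreover have "transpose_mat P *\<^sub>v (P *\<^sub>v u) = (transpose_mat P * P) *\<^sub>v u"
    using PT P(1) u by (rule assoc_mult_mat_vec[symmetric])
  ultimately show "transpose_mat P *\<^sub>v (P *\<^sub>v u) = u"
    using u by simp
qed

lemma perm_mat_orthogonal:
  assumes "perm_mat n (P :: 'a::comm_ring_1 mat)"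
  shows "P \<in> carrier_mat n n" and "P * transpose_mat P = 1\<^sub>m n"
proof -
  obtain \<sigma> where \<sigma>: "\<sigma> permutes {..<n}" and P: "P = mat n n (\<lambda>(i, j). if \<sigma> i = j then 1 else 0)"
    using assms unfolding perm_mat_def by blast
  show "P \<in> carrier_mat n n"
    by (simp add: P)
  have "(P * transpose_mat P) $$ (i, j) = 1\<^sub>m n $$ (i, j)" if "i < n" "j < n" for i j
  proof -
    have "(P * transpose_mat P) $$ (i, j)
        = (\<Sum>k<n. (if \<sigma> i = k then 1 else 0) * (if \<sigma> j = k then 1 else 0))"
      using that by (simp add: P scalar_prod_def lessThan_atLeast0)
    also have "\<dots> = (if \<sigma> i = \<sigma> j then 1 else 0)"
      using that permutes_in_image[OF \<sigma>] by (simp add: if_distrib cong: if_cong)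
    also have "\<dots> = 1\<^sub>m n $$ (i, j)"
      using that permutes_inj[OF \<sigma>] by (auto simp: inj_eq)
    finally show ?thesis .
  qed
  then show "P * transpose_mat P = 1\<^sub>m n"
    by (auto simp: P intro!: eq_matI)
qed

lemma linear_codeD:
  assumes "linear_code n C"
  shows "C \<subseteq> carrier_vec n" and "0\<^sub>v n \<in> C"
    and "x \<in> C \<Longrightarrow> y \<in> C \<Longrightarrow> x + y \<in> C" and "x \<in> C \<Longrightarrow> a \<cdot>\<^sub>v x \<in> C"
  using assms by (auto simp: linear_code_def)

lemma linear_code_diff:
  assumes C: "linear_code n C" and "x \<in> C" and "y \<in> C"
  shows "x - y \<in> C"
proof -
  have "x - y = x + (-1) \<cdot>\<^sub>v y"
    using assms linear_codeD(1)[OF C] by (intro eq_vecI) auto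
  then show ?thesis
    using assms linear_codeD(3,4)[OF C] by simp
qed

lemma linear_code_dual_code:
  assumes "C \<subseteq> carrier_vec n"
  shows "linear_code n (dual_code n C)"
  using assms unfolding linear_code_def dual_code_def
  by (auto simp: add_scalar_prod_distrib smult_scalar_prod_distrib subset_iff)

lemma inter_dual_code_eq_zero_iff:
  assumes "linear_code n C"
  shows "C \<inter> dual_code n C = {0\<^sub>v n} \<longleftrightarrow> (\<forall>h\<in>C. h \<in> dual_code n C \<longrightarrow> h = 0\<^sub>v n)"
proof -
  have "0\<^sub>v n \<in> dual_code n C"
    using linear_codeD(1)[OF assms] by (auto simp: dual_code_def)
  then show ?thesis
    using linear_codeD(2)[OF assms] by blast
qed

lemma linear_code_code_perm:
  assumes P: "P \<in> carrier_mat n n" and D: "linear_code n D"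
  shows "linear_code n (code_perm D P)"
  unfolding linear_code_def code_perm_def
proof (intro conjI ballI allI)
  let ?f = "\<lambda>c. transpose_mat P *\<^sub>v c"
  have Q: "transpose_mat P \<in> carrier_mat n n"
    using P by simp
  note Dc = linear_codeD(1)[OF D]
  show "?f ` D \<subseteq> carrier_vec n"
    using Q Dc by auto
  have "0\<^sub>v n = ?f (0\<^sub>v n)"
    using Q by (intro eq_vecI) auto
  then show "0\<^sub>v n \<in> ?f ` D"
    using linear_codeD(2)[OF D] by (rule image_eqI)
  fix x y assume "x \<in> ?f ` D" and "y \<in> ?f ` D"
  then obtain x' y' where x': "x' \<in> D" "x = ?f x'" and y': "y' \<in> D" "y = ?f y'"
    by blast
  moreover have "x' \<in> carrier_vec n" "y' \<in> carrier_vec n"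
    using x'(1) y'(1) Dc by auto
  ultimately have "x + y = ?f (x' + y')"
    using mult_add_distrib_mat_vec[OF Q] by simp
  then show "x + y \<in> ?f ` D"
    using linear_codeD(3)[OF D x'(1) y'(1)] by (rule image_eqI)
next
  let ?f = "\<lambda>c. transpose_mat P *\<^sub>v c"
  fix a x assume "x \<in> ?f ` D"
  then obtain x' where x': "x' \<in> D" "x = ?f x'"
    by blast
  moreover have "x' \<in> carrier_vec n"
    using x'(1) linear_codeD(1)[OF D] by auto
  ultimately have "a \<cdot>\<^sub>v x = ?f (a \<cdot>\<^sub>v x')"
    using mult_mat_vec[of "transpose_mat P" n n x' a] P by simp
  then show "a \<cdot>\<^sub>v x \<in> ?f ` D"
    using linear_codeD(4)[OF D x'(1)] by (rule image_eqI)
qed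

lemma dual_code_code_perm:
  assumes P: "P \<in> carrier_mat n n" "P * transpose_mat P = 1\<^sub>m n" and D: "D \<subseteq> carrier_vec n"
  shows "dual_code n (code_perm D P) = code_perm (dual_code n D) P"
proof (intro equalityI subsetI)
  fix v assume v: "v \<in> dual_code n (code_perm D P)"
  then have vc: "v \<in> carrier_vec n"
    by (simp add: dual_code_def)
  have "(P *\<^sub>v v) \<bullet> c = v \<bullet> (transpose_mat P *\<^sub>v c)" if "c \<in> D" for c
    using transpose_vec_mult_scalar[of "transpose_mat P" n n c v] P D vc that by auto
  then have "P *\<^sub>v v \<in> dual_code n D"
    using v P(1) by (auto simp: dual_code_def code_perm_def)
  moreover have "v = transpose_mat P *\<^sub>v (P *\<^sub>v v)"
    using orthogonal_mat_mult_vec_cancel(2)[OF P vc] by simp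
  ultimately show "v \<in> code_perm (dual_code n D) P"
    unfolding code_perm_def by blast
next
  fix v assume "v \<in> code_perm (dual_code n D) P"
  then obtain w where w: "w \<in> dual_code n D" and v: "v = transpose_mat P *\<^sub>v w"
    by (auto simp: code_perm_def)
  have wc: "w \<in> carrier_vec n"
    using w by (simp add: dual_code_def)
  have "v \<bullet> (transpose_mat P *\<^sub>v c) = w \<bullet> c" if c: "c \<in> D" for c
  proof -
    have cc: "c \<in> carrier_vec n"
      using c D by auto
    have "v \<bullet> (transpose_mat P *\<^sub>v c) = w \<bullet> (P *\<^sub>v (transpose_mat P *\<^sub>v c))"
      unfolding v using transpose_vec_mult_scalar[OF P(1) _ wc] P(1) cc by simp
    also have "\<dots> = w \<bullet> c"
      using orthogonal_mat_mult_vec_cancel(1)[OF P cc] by simp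
    finally show ?thesis .
  qed
  then show "v \<in> dual_code n (code_perm D P)"
    using w v P(1) wc by (auto simp: dual_code_def code_perm_def)
qed

lemma LCD_code_perm:
  assumes P: "P \<in> carrier_mat n n" "P * transpose_mat P = 1\<^sub>m n"
    and D: "linear_code n D" and LCD: "D \<inter> dual_code n D = {0\<^sub>v n}"
  shows "code_perm D P \<inter> dual_code n (code_perm D P) = {0\<^sub>v n}"
proof -
  have Dc: "D \<subseteq> carrier_vec n"
    using linear_codeD(1)[OF D] .
  have "inj_on (\<lambda>c. transpose_mat P *\<^sub>v c) (carrier_vec n)"
    using orthogonal_mat_mult_vec_cancel(1)[OF P] by (rule inj_on_inverseI)
  moreover have "dual_code n D \<subseteq> carrier_vec n"
    by (auto simp: dual_code_def)
  ultimately have "code_perm D P \<inter> code_perm (dual_code n D) P = code_perm (D \<inter> dual_code n D) P"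
    unfolding code_perm_def using inj_on_image_Int Dc by metis
  then have "code_perm D P \<inter> dual_code n (code_perm D P) = code_perm (D \<inter> dual_code n D) P"
    by (simp only: dual_code_code_perm[OF P Dc])
  also have "\<dots> = {0\<^sub>v n}"
    unfolding LCD code_perm_def using P(1) by (auto intro!: eq_vecI)
  finally show ?thesis .
qed

section \<open>Generator matrices\<close>

lemma gen_mat_dual_code_iff:
  assumes "gen_mat n C G" and "w \<in> carrier_vec n"
  shows "w \<in> dual_code n C \<longleftrightarrow> G *\<^sub>v w = 0\<^sub>v (dim_row G)"
proof -
  define k where "k = dim_row G"
  have G: "G \<in> carrier_mat k n" and C: "C = {transpose_mat G *\<^sub>v y | y. y \<in> carrier_vec k}"
    using assms(1) unfolding gen_mat_def k_def by auto
  have "w \<bullet> (transpose_mat G *\<^sub>v y) = y \<bullet> (G *\<^sub>v w)" if "y \<in> carrier_vec k" for y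
    using that G assms(2) transpose_vec_mult_scalar[OF G assms(2) that]
    by (metis comm_scalar_prod mult_mat_vec_carrier transpose_carrier_mat)
  then have "w \<in> dual_code n C \<longleftrightarrow> (\<forall>y\<in>carrier_vec k. y \<bullet> (G *\<^sub>v w) = 0)"
    using assms(2) by (auto simp: dual_code_def C)
  also have "\<dots> \<longleftrightarrow> G *\<^sub>v w = 0\<^sub>v k"
  proof
    assume orth: "\<forall>y\<in>carrier_vec k. y \<bullet> (G *\<^sub>v w) = 0"
    show "G *\<^sub>v w = 0\<^sub>v k"
    proof (rule eq_vecI)
      fix i assume "i < dim_vec (0\<^sub>v k :: 'a vec)"
      then show "(G *\<^sub>v w) $ i = 0\<^sub>v k $ i"
        using orth[rule_format, of "unit_vec k i"] G assms(2)
        by (simp add: scalar_prod_left_unit)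
    qed (use G in simp)
  qed (use G assms(2) in simp)
  finally show ?thesis
    unfolding k_def .
qed

lemma gen_mat_det_nonzero_iff:
  assumes "gen_mat n C G" and M: "M \<in> carrier_mat n n"
  shows "det (G * M * transpose_mat G) \<noteq> 0 \<longleftrightarrow> (\<forall>h\<in>C. M *\<^sub>v h \<in> dual_code n C \<longrightarrow> h = 0\<^sub>v n)"
proof -
  define k where "k = dim_row G"
  have G: "G \<in> carrier_mat k n" and C: "C = {transpose_mat G *\<^sub>v x | x. x \<in> carrier_vec k}"
    and inj: "\<And>x. x \<in> carrier_vec k \<Longrightarrow> transpose_mat G *\<^sub>v x = 0\<^sub>v n \<Longrightarrow> x = 0\<^sub>v k"
    using assms(1) unfolding gen_mat_def k_def by auto
  have radical: "(G * M * transpose_mat G) *\<^sub>v x = 0\<^sub>v k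
      \<longleftrightarrow> M *\<^sub>v (transpose_mat G *\<^sub>v x) \<in> dual_code n C" if x: "x \<in> carrier_vec k" for x
  proof -
    have "(G * M * transpose_mat G) *\<^sub>v x = (G * M) *\<^sub>v (transpose_mat G *\<^sub>v x)"
      using G M x by (intro assoc_mult_mat_vec) auto
    also have "\<dots> = G *\<^sub>v (M *\<^sub>v (transpose_mat G *\<^sub>v x))"
      using G M x by (intro assoc_mult_mat_vec) auto
    finally have eq: "(G * M * transpose_mat G) *\<^sub>v x = G *\<^sub>v (M *\<^sub>v (transpose_mat G *\<^sub>v x))" .
    have "M *\<^sub>v (transpose_mat G *\<^sub>v x) \<in> carrier_vec n"
      using G M x by simp
    then show ?thesis
      by (simp only: eq gen_mat_dual_code_iff[OF assms(1)] k_def)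
  qed
  have nonzero: "transpose_mat G *\<^sub>v x \<noteq> 0\<^sub>v n \<longleftrightarrow> x \<noteq> 0\<^sub>v k" if "x \<in> carrier_vec k" for x
    using inj[OF that] G by auto
  have "det (G * M * transpose_mat G) = 0
      \<longleftrightarrow> (\<exists>x\<in>carrier_vec k. x \<noteq> 0\<^sub>v k \<and> (G * M * transpose_mat G) *\<^sub>v x = 0\<^sub>v k)"
    using det_0_iff_vec_prod_zero[of "G * M * transpose_mat G" k] G M by auto
  also have "\<dots> \<longleftrightarrow> (\<exists>x\<in>carrier_vec k. transpose_mat G *\<^sub>v x \<noteq> 0\<^sub>v n
      \<and> M *\<^sub>v (transpose_mat G *\<^sub>v x) \<in> dual_code n C)"
    using radical nonzero by (intro bex_cong) simp_all
  also have "\<dots> \<longleftrightarrow> (\<exists>h\<in>C. h \<noteq> 0\<^sub>v n \<and> M *\<^sub>v h \<in> dual_code n C)"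
    unfolding C by blast
  finally show ?thesis
    by blast
qed

lemma gen_mat_det_gram_nonzero_iff:
  assumes C: "linear_code n C" and G: "gen_mat n C G"
  shows "det (G * 1\<^sub>m n * transpose_mat G) \<noteq> 0 \<longleftrightarrow> C \<inter> dual_code n C = {0\<^sub>v n}"
proof -
  have "(\<forall>h\<in>C. 1\<^sub>m n *\<^sub>v h \<in> dual_code n C \<longrightarrow> h = 0\<^sub>v n)
      \<longleftrightarrow> (\<forall>h\<in>C. h \<in> dual_code n C \<longrightarrow> h = 0\<^sub>v n)"
    using linear_codeD(1)[OF C] by (intro ball_cong) auto
  then show ?thesis
    unfolding gen_mat_det_nonzero_iff[OF G one_carrier_mat] inter_dual_code_eq_zero_iff[OF C] .
qed

definition lin_indpt_cols_in :: "nat \<Rightarrow> 'a::field vec set \<Rightarrow> nat \<Rightarrow> 'a mat \<Rightarrow> bool" where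
  "lin_indpt_cols_in n D k H \<longleftrightarrow> H \<in> carrier_mat n k \<and> (\<forall>x\<in>carrier_vec k. H *\<^sub>v x \<in> D) \<and>
     (\<forall>x\<in>carrier_vec k. H *\<^sub>v x = 0\<^sub>v n \<longrightarrow> x = 0\<^sub>v k)"

lemma lin_indpt_cols_in_le:
  fixes D :: "'a::{finite,field} vec set"
  assumes "lin_indpt_cols_in n D k H"
  shows "k \<le> n"
proof -
  have H: "H \<in> carrier_mat n k"
    and ker: "\<And>x. x \<in> carrier_vec k \<Longrightarrow> H *\<^sub>v x = 0\<^sub>v n \<Longrightarrow> x = 0\<^sub>v k"
    using assms by (auto simp: lin_indpt_cols_in_def)
  have "inj_on ((*\<^sub>v) H) (carrier_vec k)"
  proof (rule inj_onI)
    fix x y :: "'a vec"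
    assume x: "x \<in> carrier_vec k" and y: "y \<in> carrier_vec k" and "H *\<^sub>v x = H *\<^sub>v y"
    have "H *\<^sub>v (x - y) = H *\<^sub>v x - H *\<^sub>v y"
      by (rule mult_minus_distrib_mat_vec[OF H x y])
    also have "\<dots> = 0\<^sub>v n"
      using H x y \<open>H *\<^sub>v x = H *\<^sub>v y\<close> vec_diff_eq_zero_iff[of "H *\<^sub>v x" n "H *\<^sub>v y"] by auto
    finally have "H *\<^sub>v (x - y) = 0\<^sub>v n" .
    moreover have "x - y \<in> carrier_vec k"
      using x y by simp
    ultimately have "x - y = 0\<^sub>v k"
      using ker by blast
    then show "x = y"
      using vec_diff_eq_zero_iff[OF x y] by blast
  qed
  then have "card (carrier_vec k :: 'a vec set) \<le> card (carrier_vec n :: 'a vec set)"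
    using H by (intro card_inj_on_le) auto
  then have "CARD('a) ^ k \<le> CARD('a) ^ n"
    by (simp add: card_carrier_vec)
  moreover have "1 < CARD('a)"
    using card_mono[of UNIV "{0::'a, 1}"] by simp
  ultimately show ?thesis
    using power_le_imp_le_exp by blast
qed

lemma append_col_mult_vec:
  fixes H :: "'a::comm_ring_1 mat"
  assumes H: "H \<in> carrier_mat n k" and d: "d \<in> carrier_vec n" and x: "x \<in> carrier_vec (Suc k)"
  shows "mat n (Suc k) (\<lambda>(i, j). if j < k then H $$ (i, j) else d $ i) *\<^sub>v x
    = H *\<^sub>v vec k (($) x) + x $ k \<cdot>\<^sub>v d"
proof (rule eq_vecI)
  fix r assume "r < dim_vec (H *\<^sub>v vec k (($) x) + x $ k \<cdot>\<^sub>v d)"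
  then have r: "r < n"
    using d by simp
  have "(mat n (Suc k) (\<lambda>(i, j). if j < k then H $$ (i, j) else d $ i) *\<^sub>v x) $ r
      = (\<Sum>j<k. H $$ (r, j) * x $ j) + d $ r * x $ k"
    using r x by (simp add: scalar_prod_def lessThan_atLeast0)
  then show "(mat n (Suc k) (\<lambda>(i, j). if j < k then H $$ (i, j) else d $ i) *\<^sub>v x) $ r
      = (H *\<^sub>v vec k (($) x) + x $ k \<cdot>\<^sub>v d) $ r"
    using r H d by (simp add: scalar_prod_def lessThan_atLeast0 mult.commute)
qed (use H d in simp)

lemma lin_indpt_cols_in_extend:
  assumes D: "linear_code n D" and H: "lin_indpt_cols_in n D k H"
    and d: "d \<in> D" "d \<notin> {H *\<^sub>v x | x. x \<in> carrier_vec k}"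
  shows "lin_indpt_cols_in n D (Suc k) (mat n (Suc k) (\<lambda>(i, j). if j < k then H $$ (i, j) else d $ i))"
proof -
  let ?H' = "mat n (Suc k) (\<lambda>(i, j). if j < k then H $$ (i, j) else d $ i)"
  have Hc: "H \<in> carrier_mat n k" and HD: "\<And>x. x \<in> carrier_vec k \<Longrightarrow> H *\<^sub>v x \<in> D"
    and ker: "\<And>x. x \<in> carrier_vec k \<Longrightarrow> H *\<^sub>v x = 0\<^sub>v n \<Longrightarrow> x = 0\<^sub>v k"
    using H by (auto simp: lin_indpt_cols_in_def)
  have dc: "d \<in> carrier_vec n"
    using linear_codeD(1)[OF D] d by auto
  note split = append_col_mult_vec[OF Hc dc]
  have "x = 0\<^sub>v (Suc k)" if x: "x \<in> carrier_vec (Suc k)" and zero: "?H' *\<^sub>v x = 0\<^sub>v n" for x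
  proof -
    let ?y = "vec k (($) x)"
    have comp: "(H *\<^sub>v ?y) $ i = - (x $ k * d $ i)" if "i < n" for i
      using arg_cong[OF zero, of "\<lambda>v. v $ i"] split[OF x] that Hc dc
      by (simp add: eq_neg_iff_add_eq_0)
    have xk: "x $ k = 0"
    proof (rule ccontr)
      assume "x $ k \<noteq> 0"
      then have "d = H *\<^sub>v ((- 1 / x $ k) \<cdot>\<^sub>v ?y)"
        using comp Hc dc by (intro eq_vecI) (auto simp: mult_mat_vec)
      then show False
        using d(2) by auto
    qed
    then have "H *\<^sub>v ?y = 0\<^sub>v n"
      using comp Hc by (intro eq_vecI) auto
    with ker have "?y = 0\<^sub>v k"
      by simp
    then show ?thesis
      using xk x by (auto simp: vec_eq_iff less_Suc_eq)
  qed
  moreover have "?H' *\<^sub>v x \<in> D" if "x \<in> carrier_vec (Suc k)" for x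
    using split[OF that] HD[of "vec k (($) x)"] linear_codeD(3,4)[OF D] d(1) by simp
  moreover have "?H' \<in> carrier_mat n (Suc k)"
    by simp
  ultimately show ?thesis
    unfolding lin_indpt_cols_in_def by blast
qed

lemma gen_mat_exists:
  fixes D :: "'a::{finite,field} vec set"
  assumes D: "linear_code n D"
  shows "\<exists>G. gen_mat n D G"
proof -
  have "lin_indpt_cols_in n D 0 (0\<^sub>m n 0)"
    unfolding lin_indpt_cols_in_def
  proof (intro conjI ballI impI)
    fix x :: "'a vec" assume x: "x \<in> carrier_vec 0"
    have "0\<^sub>m n 0 *\<^sub>v x = 0\<^sub>v n"
      using x by (intro eq_vecI) (auto simp: scalar_prod_def)
    then show "0\<^sub>m n 0 *\<^sub>v x \<in> D"
      using linear_codeD(2)[OF D] by simp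
    show "x = 0\<^sub>v 0"
      using x by (simp add: vec_eq_iff)
  qed simp
  then obtain k where "\<exists>H. lin_indpt_cols_in n D k H"
    and maximal: "\<And>k'. \<exists>H. lin_indpt_cols_in n D k' H \<Longrightarrow> k' \<le> k"
    using Nat.ex_has_greatest_nat[of "\<lambda>k. \<exists>H. lin_indpt_cols_in n D k H" 0 n]
      lin_indpt_cols_in_le by blast
  then obtain H where H: "lin_indpt_cols_in n D k H"
    by blast
  have "D \<subseteq> {H *\<^sub>v x | x. x \<in> carrier_vec k}"
  proof
    fix d assume d: "d \<in> D"
    show "d \<in> {H *\<^sub>v x | x. x \<in> carrier_vec k}"
    proof (rule ccontr)
      assume "d \<notin> {H *\<^sub>v x | x. x \<in> carrier_vec k}"
      then have "Suc k \<le> k"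
        using lin_indpt_cols_in_extend[OF D H d] maximal by blast
      then show False
        by simp
    qed
  qed
  then have "gen_mat n D (transpose_mat H)"
    using H by (auto simp: gen_mat_def lin_indpt_cols_in_def)
  then show ?thesis
    by blast
qed

section \<open>Orthogonal projections\<close>

definition is_orth_proj :: "nat \<Rightarrow> 'a::field vec set \<Rightarrow> 'a mat \<Rightarrow> bool" where
  "is_orth_proj n D A \<longleftrightarrow> A \<in> carrier_mat n n \<and>
     (\<forall>u\<in>carrier_vec n. A *\<^sub>v u \<in> D \<and> u - A *\<^sub>v u \<in> dual_code n D)"

lemma is_orth_proj_unique:
  assumes D: "linear_code n D" and LCD: "D \<inter> dual_code n D = {0\<^sub>v n}"
    and A: "is_orth_proj n D A" and B: "is_orth_proj n D B"
  shows "A = B"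
proof (rule mat_eq_if_mult_vec_eq)
  show "A \<in> carrier_mat n n" "B \<in> carrier_mat n n"
    using A B by (auto simp: is_orth_proj_def)
  fix u :: "'a vec" assume u: "u \<in> carrier_vec n"
  have Au: "A *\<^sub>v u \<in> carrier_vec n" and Bu: "B *\<^sub>v u \<in> carrier_vec n"
    using A B u by (auto simp: is_orth_proj_def)
  have dual: "linear_code n (dual_code n D)"
    using linear_code_dual_code linear_codeD(1)[OF D] by blast
  have swap: "(u - b) - (u - a) = a - b" if "a \<in> carrier_vec n" "b \<in> carrier_vec n" for a b :: "'a vec"
    using that u by (auto simp: vec_eq_iff)
  have "A *\<^sub>v u - B *\<^sub>v u \<in> D"
    using linear_code_diff[OF D] A B u by (auto simp: is_orth_proj_def)
  moreover have "A *\<^sub>v u - B *\<^sub>v u \<in> dual_code n D"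
    using linear_code_diff[OF dual, of "u - B *\<^sub>v u" "u - A *\<^sub>v u"] A B u
    unfolding swap[OF Au Bu] by (auto simp: is_orth_proj_def)
  ultimately have "A *\<^sub>v u - B *\<^sub>v u = 0\<^sub>v n"
    using LCD by auto
  then show "A *\<^sub>v u = B *\<^sub>v u"
    using vec_diff_eq_zero_iff[OF Au Bu] by blast
qed

lemma is_orth_proj_image:
  assumes D: "linear_code n D" and LCD: "D \<inter> dual_code n D = {0\<^sub>v n}"
    and A: "is_orth_proj n D A"
  shows "D = {A *\<^sub>v u | u. u \<in> carrier_vec n}"
proof (intro equalityI subsetI)
  fix c assume c: "c \<in> D"
  then have cc: "c \<in> carrier_vec n" and Ac: "A *\<^sub>v c \<in> carrier_vec n"
    using linear_codeD(1)[OF D] A by (auto simp: is_orth_proj_def)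
  have "c - A *\<^sub>v c \<in> D \<inter> dual_code n D"
    using linear_code_diff[OF D c] A cc by (auto simp: is_orth_proj_def)
  then have "c = A *\<^sub>v c"
    using LCD vec_diff_eq_zero_iff[OF cc Ac] by auto
  then show "c \<in> {A *\<^sub>v u | u. u \<in> carrier_vec n}"
    using cc by blast
qed (use A in \<open>auto simp: is_orth_proj_def\<close>)

lemma is_orth_proj_code_perm:
  assumes P: "P \<in> carrier_mat n n" "P * transpose_mat P = 1\<^sub>m n"
    and D: "D \<subseteq> carrier_vec n" and A: "is_orth_proj n D A"
  shows "is_orth_proj n (code_perm D P) (transpose_mat P * A * P)"
  unfolding is_orth_proj_def
proof (intro conjI ballI)
  have Ac: "A \<in> carrier_mat n n"
    using A by (simp add: is_orth_proj_def)
  then show "transpose_mat P * A * P \<in> carrier_mat n n"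
    using P by simp
  fix u :: "'a vec" assume u: "u \<in> carrier_vec n"
  have Pu: "P *\<^sub>v u \<in> carrier_vec n" and APu: "A *\<^sub>v (P *\<^sub>v u) \<in> carrier_vec n"
    using P Ac u by auto
  have "(transpose_mat P * A * P) *\<^sub>v u = (transpose_mat P * A) *\<^sub>v (P *\<^sub>v u)"
    using P Ac u by (intro assoc_mult_mat_vec) auto
  also have "\<dots> = transpose_mat P *\<^sub>v (A *\<^sub>v (P *\<^sub>v u))"
    using P Ac Pu by (intro assoc_mult_mat_vec) auto
  finally have conj: "(transpose_mat P * A * P) *\<^sub>v u = transpose_mat P *\<^sub>v (A *\<^sub>v (P *\<^sub>v u))" .
  then show "(transpose_mat P * A * P) *\<^sub>v u \<in> code_perm D P"
    using A Pu by (auto simp: is_orth_proj_def code_perm_def)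
  have "u - (transpose_mat P * A * P) *\<^sub>v u
      = transpose_mat P *\<^sub>v (P *\<^sub>v u) - transpose_mat P *\<^sub>v (A *\<^sub>v (P *\<^sub>v u))"
    unfolding conj orthogonal_mat_mult_vec_cancel(2)[OF P u] ..
  also have "\<dots> = transpose_mat P *\<^sub>v (P *\<^sub>v u - A *\<^sub>v (P *\<^sub>v u))"
    using P(1) Pu APu by (intro mult_minus_distrib_mat_vec[symmetric]) auto
  finally have "u - (transpose_mat P * A * P) *\<^sub>v u = transpose_mat P *\<^sub>v (P *\<^sub>v u - A *\<^sub>v (P *\<^sub>v u))" .
  moreover have "P *\<^sub>v u - A *\<^sub>v (P *\<^sub>v u) \<in> dual_code n D"
    using A Pu by (simp add: is_orth_proj_def)
  ultimately show "u - (transpose_mat P * A * P) *\<^sub>v u \<in> dual_code n (code_perm D P)"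
    unfolding dual_code_code_perm[OF P D] by (simp add: code_perm_def)
qed

lemma gen_mat_orth_proj:
  assumes G: "gen_mat n D G" and Gc: "G \<in> carrier_mat k n"
    and B: "B \<in> carrier_mat k k" and inv: "G * transpose_mat G * B = 1\<^sub>m k"
  shows "is_orth_proj n D (transpose_mat G * B * G)"
  unfolding is_orth_proj_def
proof (intro conjI ballI)
  have GT: "transpose_mat G \<in> carrier_mat n k"
    using Gc by simp
  show "transpose_mat G * B * G \<in> carrier_mat n n"
    using GT B Gc by simp
  fix u :: "'a vec" assume u: "u \<in> carrier_vec n"
  have Gu: "G *\<^sub>v u \<in> carrier_vec k" and BGu: "B *\<^sub>v (G *\<^sub>v u) \<in> carrier_vec k"
    using B Gc u by auto
  have "(transpose_mat G * B * G) *\<^sub>v u = (transpose_mat G * B) *\<^sub>v (G *\<^sub>v u)"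
    using GT B Gc u by (intro assoc_mult_mat_vec) auto
  also have "\<dots> = transpose_mat G *\<^sub>v (B *\<^sub>v (G *\<^sub>v u))"
    using GT B Gu by (rule assoc_mult_mat_vec)
  finally have proj: "(transpose_mat G * B * G) *\<^sub>v u = transpose_mat G *\<^sub>v (B *\<^sub>v (G *\<^sub>v u))" .
  then show "(transpose_mat G * B * G) *\<^sub>v u \<in> D"
    using G Gc BGu by (auto simp: gen_mat_def)
  have "G *\<^sub>v (transpose_mat G *\<^sub>v (B *\<^sub>v (G *\<^sub>v u))) = (G * transpose_mat G) *\<^sub>v (B *\<^sub>v (G *\<^sub>v u))"
    using Gc GT BGu by (rule assoc_mult_mat_vec[symmetric])
  also have "\<dots> = (G * transpose_mat G * B) *\<^sub>v (G *\<^sub>v u)"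
    using Gc GT B Gu by (intro assoc_mult_mat_vec[symmetric]) auto
  also have "\<dots> = G *\<^sub>v u"
    unfolding inv using Gu by simp
  finally have "G *\<^sub>v (u - transpose_mat G *\<^sub>v (B *\<^sub>v (G *\<^sub>v u))) = 0\<^sub>v k"
    using mult_minus_distrib_mat_vec[OF Gc u, of "transpose_mat G *\<^sub>v (B *\<^sub>v (G *\<^sub>v u))"] GT BGu Gu
    by simp
  then show "u - (transpose_mat G * B * G) *\<^sub>v u \<in> dual_code n D"
    unfolding proj using gen_mat_dual_code_iff[OF G] u GT BGu Gc by simp
qed

lemma LCD_imp_Pi_mat_one_orth_proj:
  fixes D :: "'a::{finite,field} vec set"
  assumes D: "linear_code n D" and LCD: "D \<inter> dual_code n D = {0\<^sub>v n}"
  shows "M_LCD n (1\<^sub>m n) D" and "is_orth_proj n D (Pi_mat n (1\<^sub>m n) D)"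
proof -
  have ex: "\<exists>G. gen_mat n D G \<and> det (G * 1\<^sub>m n * transpose_mat G) \<noteq> 0"
    using gen_mat_exists[OF D] gen_mat_det_gram_nonzero_iff[OF D] LCD by blast
  then show "M_LCD n (1\<^sub>m n) D"
    by (simp add: M_LCD_def)
  define G where "G = (SOME G. gen_mat n D G \<and> det (G * 1\<^sub>m n * transpose_mat G) \<noteq> 0)"
  have G: "gen_mat n D G" and det: "det (G * 1\<^sub>m n * transpose_mat G) \<noteq> 0"
    using someI_ex[OF ex] unfolding G_def by auto
  define k where "k = dim_row G"
  have Gc: "G \<in> carrier_mat k n"
    using G by (simp add: gen_mat_def k_def)
  then have gram: "G * 1\<^sub>m n * transpose_mat G = G * transpose_mat G"
    by simp
  have gram_carrier: "G * transpose_mat G \<in> carrier_mat k k"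
    using Gc by simp
  have "G * transpose_mat G \<in> Units (ring_mat TYPE('a) k ())"
    using det_non_zero_imp_unit[OF gram_carrier] det gram by simp
  then obtain B where B: "mat_inverse (G * transpose_mat G) = Some B"
    using mat_inverse(1)[OF gram_carrier, where b="()"]
    by (cases "mat_inverse (G * transpose_mat G)") auto
  then have "G * transpose_mat G * B = 1\<^sub>m k" and "B \<in> carrier_mat k k"
    using mat_inverse(2)[OF gram_carrier] by auto
  moreover have "Pi_mat n (1\<^sub>m n) D = transpose_mat G * B * G"
    unfolding Pi_mat_def Let_def G_def[symmetric] gram B using Gc by simp
  ultimately show "is_orth_proj n D (Pi_mat n (1\<^sub>m n) D)"
    using gen_mat_orth_proj[OF G Gc] by simp
qed

lemma code_equiv_iff_mat_equiv_Pi_mat: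
  fixes D1 D2 :: "'a::{finite,field} vec set"
  assumes D1: "linear_code n D1" "D1 \<inter> dual_code n D1 = {0\<^sub>v n}"
    and D2: "linear_code n D2" "D2 \<inter> dual_code n D2 = {0\<^sub>v n}"
  shows "code_equiv n D1 D2 \<longleftrightarrow> mat_equiv n (Pi_mat n (1\<^sub>m n) D1) (Pi_mat n (1\<^sub>m n) D2)"
proof
  assume "code_equiv n D1 D2"
  then obtain P where P: "perm_mat n P" and D2_eq: "D2 = code_perm D1 P"
    unfolding code_equiv_def by blast
  have "is_orth_proj n D2 (transpose_mat P * Pi_mat n (1\<^sub>m n) D1 * P)"
    unfolding D2_eq using is_orth_proj_code_perm[OF perm_mat_orthogonal[OF P] linear_codeD(1)[OF D1(1)]
      LCD_imp_Pi_mat_one_orth_proj(2)[OF D1]] .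
  then have "Pi_mat n (1\<^sub>m n) D2 = transpose_mat P * Pi_mat n (1\<^sub>m n) D1 * P"
    using is_orth_proj_unique[OF D2 LCD_imp_Pi_mat_one_orth_proj(2)[OF D2]] by blast
  then show "mat_equiv n (Pi_mat n (1\<^sub>m n) D1) (Pi_mat n (1\<^sub>m n) D2)"
    unfolding mat_equiv_def using P by blast
next
  assume "mat_equiv n (Pi_mat n (1\<^sub>m n) D1) (Pi_mat n (1\<^sub>m n) D2)"
  then obtain P where P: "perm_mat n P"
    and Pi_eq: "Pi_mat n (1\<^sub>m n) D2 = transpose_mat P * Pi_mat n (1\<^sub>m n) D1 * P"
    unfolding mat_equiv_def by blast
  note P_orth = perm_mat_orthogonal[OF P]
  have "is_orth_proj n (code_perm D1 P) (Pi_mat n (1\<^sub>m n) D2)"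
    unfolding Pi_eq using is_orth_proj_code_perm[OF P_orth linear_codeD(1)[OF D1(1)]
      LCD_imp_Pi_mat_one_orth_proj(2)[OF D1]] .
  then have "code_perm D1 P = {Pi_mat n (1\<^sub>m n) D2 *\<^sub>v u | u. u \<in> carrier_vec n}"
    using is_orth_proj_image linear_code_code_perm[OF P_orth(1) D1(1)] LCD_code_perm[OF P_orth D1]
    by blast
  also have "\<dots> = D2"
    using is_orth_proj_image[OF D2 LCD_imp_Pi_mat_one_orth_proj(2)[OF D2]] by blast
  finally show "code_equiv n D1 D2"
    unfolding code_equiv_def using P by blast
qed

section \<open>GI-reducibility\<close>

lemma LCD_imp_GI_reducible:
  fixes C :: "'a::{finite,field} vec set"
  assumes C: "linear_code n C" and LCD: "C \<inter> dual_code n C = {0\<^sub>v n}"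
  shows "GI_reducible n C"
proof -
  have permuted: "linear_code n (code_perm C P) \<and> code_perm C P \<inter> dual_code n (code_perm C P) = {0\<^sub>v n}"
    if "perm_mat n P" for P
    using linear_code_code_perm LCD_code_perm perm_mat_orthogonal[OF that] C LCD by blast
  have identity: "(1::'a) \<cdot>\<^sub>m 1\<^sub>m n + 0 \<cdot>\<^sub>m mat n n (\<lambda>_. 1) = 1\<^sub>m n"
    by auto
  show ?thesis
    unfolding GI_reducible_def Let_def
  proof (intro exI conjI)
    show "(1::'a) \<noteq> 0" and "1 + of_nat n * (0::'a) \<noteq> 0"
      by simp_all
    show "\<forall>P. perm_mat n P \<longrightarrow> M_LCD n ((1::'a) \<cdot>\<^sub>m 1\<^sub>m n + 0 \<cdot>\<^sub>m mat n n (\<lambda>_. 1)) (code_perm C P)"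
      unfolding identity using LCD_imp_Pi_mat_one_orth_proj(1) permuted by blast
    show "\<forall>C1 C2. C1 \<in> {code_perm C P | P. perm_mat n P} \<longrightarrow> C2 \<in> {code_perm C P | P. perm_mat n P} \<longrightarrow>
        (code_equiv n C1 C2 \<longleftrightarrow> mat_equiv n
          (Pi_mat n ((1::'a) \<cdot>\<^sub>m 1\<^sub>m n + 0 \<cdot>\<^sub>m mat n n (\<lambda>_. 1)) C1)
          (Pi_mat n ((1::'a) \<cdot>\<^sub>m 1\<^sub>m n + 0 \<cdot>\<^sub>m mat n n (\<lambda>_. 1)) C2))"
      unfolding identity using code_equiv_iff_mat_equiv_Pi_mat permuted by blast
  qed
qed

lemma M_LCD_scalar_plus_all_ones_imp_LCD:
  fixes C :: "'a::field vec set"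
  assumes two: "(2::'a) = 0" and C: "linear_code n C"
    and M_LCD: "M_LCD n (a \<cdot>\<^sub>m 1\<^sub>m n + b \<cdot>\<^sub>m mat n n (\<lambda>_. 1)) C"
  shows "C \<inter> dual_code n C = {0\<^sub>v n}"
proof -
  obtain G where G: "gen_mat n C G"
    and det: "det (G * (a \<cdot>\<^sub>m 1\<^sub>m n + b \<cdot>\<^sub>m mat n n (\<lambda>_. 1)) * transpose_mat G) \<noteq> 0"
    using M_LCD unfolding M_LCD_def by blast
  have "h = 0\<^sub>v n" if h: "h \<in> C" "h \<in> dual_code n C" for h
  proof -
    have hc: "h \<in> carrier_vec n"
      using h(2) by (simp add: dual_code_def)
    have "h \<bullet> h = 0"
      using h by (simp add: dual_code_def)
    then have "(a \<cdot>\<^sub>m 1\<^sub>m n + b \<cdot>\<^sub>m mat n n (\<lambda>_. 1)) *\<^sub>v h = a \<cdot>\<^sub>v h"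
      using scalar_plus_all_ones_mult_vec[OF hc] sum_eq_zero_if_self_orthogonal[OF two hc] by simp
    also have "a \<cdot>\<^sub>v h \<in> dual_code n C"
      using linear_codeD(4)[OF linear_code_dual_code[OF linear_codeD(1)[OF C]] h(2)] .
    finally show ?thesis
      using gen_mat_det_nonzero_iff[OF G] det h(1) by simp
  qed
  then show ?thesis
    using inter_dual_code_eq_zero_iff[OF C] by blast
qed

lemma GI_reducible_imp_LCD:
  fixes C :: "'a::field vec set"
  assumes two: "(2::'a) = 0" and C: "linear_code n C" and GI: "GI_reducible n C"
  shows "C \<inter> dual_code n C = {0\<^sub>v n}"
proof -
  obtain a b where "\<forall>P. perm_mat n P \<longrightarrow> M_LCD n (a \<cdot>\<^sub>m 1\<^sub>m n + b \<cdot>\<^sub>m mat n n (\<lambda>_. 1)) (code_perm C P)"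
    using GI unfolding GI_reducible_def Let_def by blast
  moreover have "perm_mat n (1\<^sub>m n)"
    unfolding perm_mat_def by (rule exI[of _ id]) (auto intro!: eq_matI)
  moreover have "code_perm C (1\<^sub>m n) = C"
    using linear_codeD(1)[OF C] unfolding code_perm_def by force
  ultimately show ?thesis
    using M_LCD_scalar_plus_all_ones_imp_LCD[OF two C] by metis
qed

theorem mainTheorem5:
  fixes C :: "'a::{finite,field} vec set" and n m :: nat
  assumes "card (UNIV :: 'a set) = 2 ^ m"
    and "linear_code n C"
  shows "GI_reducible n C \<longleftrightarrow> C \<inter> dual_code n C = {0\<^sub>v n}"
  using GI_reducible_imp_LCD[OF two_eq_zero_if_card_power_of_two[OF assms(1)] assms(2)]
    LCD_imp_GI_reducible[OF assms(2)] by blast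

end
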